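(* Let $(G,M,\Delta)$ be a Garside structure and $(H,N,\delta)$ a parabolic substructure. Let $\alpha\in G$, $\ell=\lg(H\alpha)$ and $\mathrm{Min}(\alpha)=\{\gamma\in H\alpha:\lg(\gamma)=\ell\}$. Then $\ell=d(\alpha,H)$, and the map $\mathrm{Min}(\alpha)\to\pi_H(\alpha)$, $\gamma\mapsto\alpha\gamma^{-1}$, is a well-defined bijection.
   Context: Let $G$ be a group and $M$ a submonoid with $M\cap M^{-1}=\{1\}$. Define $\alpha\le_L\beta$ iff $\alpha^{-1}\beta\in M$, and $\alpha\le_R\beta$ iff $\beta\alpha^{-1}\in M$. For $a\in M$ let $\mathrm{Div}_L(a)=\{b\in M: b\le_L a\}$, $\mathrm{Div}_R(a)=\{b\in M: b\le_R a\}$; $a$ is balanced if these coincide, and then $\mathrm{Div}(a)$ denotes this set. $M$ is Noetherian if each $a\in M$ admits an $n$ such that $a$ is not a product of more than $n$ non-trivial factors. A Garside structure $(G,M,\Delta)$: $\Delta\in M$ balanced, $M$ Noetherian, $\mathrm{Div}(\Delta)$ finite and generating $M$ as a monoid and $G$ as a group, $(G,\le_L)$ a lattice. A parabolic substructure $(H,N,\delta)$: $\delta\in M$ balanced, $H$ (resp. $N$) the subgroup (resp. submonoid) generated by $\mathrm{Div}(\delta)$, and $\mathrm{Div}(\delta)=\mathrm{Div}(\Delta)\cap N$; it is assumed $H\ne\{1\}$. $\lg$ is word length w.r.t. $\mathcal S=\mathrm{Div}(\Delta)\setminus\{1\}$; for a right coset $C$, $\lg(C)=\min_{\beta\in C}\lg(\beta)$.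 $d(\alpha,\beta)=\lg(\alpha^{-1}\beta)$, $d(\alpha,H)=\min_{\beta\in H}d(\alpha,\beta)$, $\pi_H(\alpha)=\{\beta\in H:d(\alpha,\beta)=d(\alpha,H)\}$. *)

theory Defs
  imports "HOL-Algebra.Algebra"
begin

definition wprod :: "('a, 'b) monoid_scheme \<Rightarrow> 'a list \<Rightarrow> 'a" where
  "wprod G xs = foldr (\<lambda>x y. x \<otimes>\<^bsub>G\<^esub> y) xs \<one>\<^bsub>G\<^esub>"

definition leL :: "('a, 'b) monoid_scheme \<Rightarrow> 'a set \<Rightarrow> 'a \<Rightarrow> 'a \<Rightarrow> bool" where
  "leL G M a b \<longleftrightarrow> inv\<^bsub>G\<^esub> a \<otimes>\<^bsub>G\<^esub> b \<in> M"

definition leR :: "('a, 'b) monoid_scheme \<Rightarrow> 'a set \<Rightarrow> 'a \<Rightarrow> 'a \<Rightarrow> bool" where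
  "leR G M a b \<longleftrightarrow> b \<otimes>\<^bsub>G\<^esub> inv\<^bsub>G\<^esub> a \<in> M"

definition DivL :: "('a, 'b) monoid_scheme \<Rightarrow> 'a set \<Rightarrow> 'a \<Rightarrow> 'a set" where
  "DivL G M a = {b \<in> M. leL G M b a}"

definition DivR :: "('a, 'b) monoid_scheme \<Rightarrow> 'a set \<Rightarrow> 'a \<Rightarrow> 'a set" where
  "DivR G M a = {b \<in> M. leR G M b a}"

definition balanced :: "('a, 'b) monoid_scheme \<Rightarrow> 'a set \<Rightarrow> 'a \<Rightarrow> bool" where
  "balanced G M a \<longleftrightarrow> a \<in> M \<and> DivL G M a = DivR G M a"

text \<open>Div a, meaningful for balanced a.\<close>
definition Div :: "('a, 'b) monoid_scheme \<Rightarrow> 'a set \<Rightarrow> 'a \<Rightarrow> 'a set" where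
  "Div G M a = DivL G M a"

inductive_set monoid_gen :: "('a, 'b) monoid_scheme \<Rightarrow> 'a set \<Rightarrow> 'a set"
  for G and S where
    one: "\<one>\<^bsub>G\<^esub> \<in> monoid_gen G S"
  | incl: "s \<in> S \<Longrightarrow> s \<in> monoid_gen G S"
  | mult: "x \<in> monoid_gen G S \<Longrightarrow> y \<in> monoid_gen G S \<Longrightarrow> x \<otimes>\<^bsub>G\<^esub> y \<in> monoid_gen G S"

definition pointed_submonoid :: "('a, 'b) monoid_scheme \<Rightarrow> 'a set \<Rightarrow> bool" where
  "pointed_submonoid G M \<longleftrightarrow> M \<subseteq> carrier G \<and> \<one>\<^bsub>G\<^esub> \<in> M
     \<and> (\<forall>x\<in>M. \<forall>y\<in>M. x \<otimes>\<^bsub>G\<^esub> y \<in> M)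
     \<and> M \<inter> (\<lambda>x. inv\<^bsub>G\<^esub> x) ` M = {\<one>\<^bsub>G\<^esub>}"

definition noetherian :: "('a, 'b) monoid_scheme \<Rightarrow> 'a set \<Rightarrow> bool" where
  "noetherian G M \<longleftrightarrow> (\<forall>a\<in>M. \<exists>n::nat. \<forall>xs. set xs \<subseteq> M - {\<one>\<^bsub>G\<^esub>} \<and> wprod G xs = a
      \<longrightarrow> length xs \<le> n)"

definition leL_order :: "('a, 'b) monoid_scheme \<Rightarrow> 'a set \<Rightarrow> 'a gorder" where
  "leL_order G M = \<lparr>carrier = carrier G, eq = (=), le = leL G M\<rparr>"

definition garside :: "('a, 'b) monoid_scheme \<Rightarrow> 'a set \<Rightarrow> 'a \<Rightarrow> bool" where
  "garside G M \<Delta> \<longleftrightarrow> group G \<and> pointed_submonoid G M \<and> balanced G M \<Delta>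
     \<and> noetherian G M \<and> finite (Div G M \<Delta>)
     \<and> monoid_gen G (Div G M \<Delta>) = M \<and> generate G (Div G M \<Delta>) = carrier G
     \<and> lattice (leL_order G M)"

definition parabolic :: "('a, 'b) monoid_scheme \<Rightarrow> 'a set \<Rightarrow> 'a \<Rightarrow> 'a set \<Rightarrow> 'a set \<Rightarrow> 'a \<Rightarrow> bool" where
  "parabolic G M \<Delta> H N \<delta> \<longleftrightarrow> \<delta> \<in> M \<and> balanced G M \<delta>
     \<and> H = generate G (Div G M \<delta>) \<and> N = monoid_gen G (Div G M \<delta>)
     \<and> Div G M \<delta> = Div G M \<Delta> \<inter> N \<and> H \<noteq> {\<one>\<^bsub>G\<^esub>}"

definition gens :: "('a, 'b) monoid_scheme \<Rightarrow> 'a set \<Rightarrow> 'a \<Rightarrow> 'a set" where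
  "gens G M \<Delta> = Div G M \<Delta> - {\<one>\<^bsub>G\<^esub>}"

definition lg :: "('a, 'b) monoid_scheme \<Rightarrow> 'a set \<Rightarrow> 'a \<Rightarrow> 'a \<Rightarrow> nat" where
  "lg G M \<Delta> x = (LEAST n. \<exists>xs. length xs = n
      \<and> set xs \<subseteq> gens G M \<Delta> \<union> (\<lambda>s. inv\<^bsub>G\<^esub> s) ` gens G M \<Delta> \<and> wprod G xs = x)"

definition lg_set :: "('a, 'b) monoid_scheme \<Rightarrow> 'a set \<Rightarrow> 'a \<Rightarrow> 'a set \<Rightarrow> nat" where
  "lg_set G M \<Delta> C = (LEAST n. n \<in> lg G M \<Delta> ` C)"

definition dist :: "('a, 'b) monoid_scheme \<Rightarrow> 'a set \<Rightarrow> 'a \<Rightarrow> 'a \<Rightarrow> 'a \<Rightarrow> nat" where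
  "dist G M \<Delta> a b = lg G M \<Delta> (inv\<^bsub>G\<^esub> a \<otimes>\<^bsub>G\<^esub> b)"

definition dist_set :: "('a, 'b) monoid_scheme \<Rightarrow> 'a set \<Rightarrow> 'a \<Rightarrow> 'a \<Rightarrow> 'a set \<Rightarrow> nat" where
  "dist_set G M \<Delta> a H = (LEAST n. n \<in> dist G M \<Delta> a ` H)"

definition proj :: "('a, 'b) monoid_scheme \<Rightarrow> 'a set \<Rightarrow> 'a \<Rightarrow> 'a set \<Rightarrow> 'a \<Rightarrow> 'a set" where
  "proj G M \<Delta> H a = {b \<in> H. dist G M \<Delta> a b = dist_set G M \<Delta> a H}"

end

theory Submission
  imports Defs
begin

text \<open>Word length is invariant under inversion, so \<open>lg \<gamma> = lg (inv \<gamma>) = d(\<alpha>, \<alpha> \<gamma>\<^sup>-\<^sup>1)\<close>.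
  Since \<open>\<gamma> \<mapsto> \<alpha> \<gamma>\<^sup>-\<^sup>1\<close> maps the coset \<open>H \<alpha>\<close> bijectively onto \<open>H\<close>, it transports the
  length function on \<open>H \<alpha>\<close> to the distance from \<open>\<alpha>\<close> on \<open>H\<close>; hence both have the same
  minimum and the minimizers correspond.\<close>

lemma bij_betw_minimizers:
  assumes "bij_betw f A B" and "\<And>x. x \<in> A \<Longrightarrow> u x = v (f x)"
  shows "(LEAST n. n \<in> u ` A) = (LEAST n. n \<in> v ` B)"
    and "bij_betw f {x \<in> A. u x = (LEAST n. n \<in> u ` A)} {y \<in> B. v y = (LEAST n. n \<in> v ` B)}"
proof -
  have img: "u ` A = v ` B"
    using assms by (force simp: bij_betw_def)
  then show "(LEAST n. n \<in> u ` A) = (LEAST n. n \<in> v ` B)" by simp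
  show "bij_betw f {x \<in> A. u x = (LEAST n. n \<in> u ` A)} {y \<in> B. v y = (LEAST n. n \<in> v ` B)}"
    using assms unfolding img by (auto simp: bij_betw_def inj_on_def)
qed

context group
begin

lemma wprod_Cons: "wprod G (a # xs) = a \<otimes> wprod G xs"
  by (simp add: wprod_def)

lemma wprod_closed: "set xs \<subseteq> carrier G \<Longrightarrow> wprod G xs \<in> carrier G"
  by (induction xs) (auto simp: wprod_def)

lemma wprod_append:
  "set xs \<subseteq> carrier G \<Longrightarrow> set ys \<subseteq> carrier G \<Longrightarrow> wprod G (xs @ ys) = wprod G xs \<otimes> wprod G ys"
  by (induction xs) (auto simp: wprod_def m_assoc wprod_closed[unfolded wprod_def])

lemma wprod_rev_map_inv:
  "set xs \<subseteq> carrier G \<Longrightarrow> wprod G (rev (map (\<lambda>x. inv x) xs)) = inv (wprod G xs)"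
proof (induction xs)
  case Nil
  then show ?case by (simp add: wprod_def)
next
  case (Cons a xs)
  then have "wprod G (rev (map (\<lambda>x. inv x) (a # xs)))
      = wprod G (rev (map (\<lambda>x. inv x) xs)) \<otimes> wprod G [inv a]"
    by (simp only: rev.simps list.map) (rule wprod_append; auto)
  also have "\<dots> = inv (wprod G xs) \<otimes> inv a"
    using Cons by (simp add: wprod_def)
  also have "\<dots> = inv (wprod G (a # xs))"
    using Cons.prems by (simp add: wprod_Cons wprod_closed inv_mult_group)
  finally show ?case .
qed

lemma exists_word_wprod_inv:
  assumes "S \<subseteq> carrier G" and "(\<lambda>x. inv x) ` S \<subseteq> S"
    and "length xs = n" and "set xs \<subseteq> S" and "wprod G xs = x"
  shows "\<exists>ys. length ys = n \<and> set ys \<subseteq> S \<and> wprod G ys = inv x"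
  using assms wprod_rev_map_inv[of xs]
  by (intro exI[of _ "rev (map (\<lambda>x. inv x) xs)"]) auto

lemma lg_inv:
  assumes "gens G M \<Delta> \<subseteq> carrier G" and "x \<in> carrier G"
  shows "lg G M \<Delta> (inv x) = lg G M \<Delta> x"
proof -
  let ?S = "gens G M \<Delta> \<union> (\<lambda>x. inv x) ` gens G M \<Delta>"
  have S: "?S \<subseteq> carrier G" "(\<lambda>x. inv x) ` ?S \<subseteq> ?S"
    using assms(1) by (auto simp: image_iff subset_iff)
  have "(\<exists>xs. length xs = n \<and> set xs \<subseteq> ?S \<and> wprod G xs = inv x)
      \<longleftrightarrow> (\<exists>xs. length xs = n \<and> set xs \<subseteq> ?S \<and> wprod G xs = x)" for n
    using exists_word_wprod_inv[OF S] assms(2) by (metis inv_inv)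
  then show ?thesis unfolding lg_def by simp
qed

lemma lg_eq_dist:
  assumes "gens G M \<Delta> \<subseteq> carrier G" and "\<alpha> \<in> carrier G" and "\<gamma> \<in> carrier G"
  shows "lg G M \<Delta> \<gamma> = dist G M \<Delta> \<alpha> (\<alpha> \<otimes> inv \<gamma>)"
  using assms by (simp add: dist_def lg_inv m_assoc[symmetric])

lemma bij_betw_rcos_mult_inv:
  assumes "subgroup H G" and "\<alpha> \<in> carrier G"
  shows "bij_betw (\<lambda>\<gamma>. \<alpha> \<otimes> inv \<gamma>) (H #> \<alpha>) H"
proof -
  interpret H: subgroup H G by fact
  have *: "\<alpha> \<otimes> inv (h \<otimes> \<alpha>) = inv h" if "h \<in> H" for h
    using that assms(2) by (simp add: inv_mult_group m_assoc[symmetric])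
  show ?thesis
  proof (rule bij_betw_byWitness[where f' = "\<lambda>b. inv b \<otimes> \<alpha>"])
    show "\<forall>\<gamma>\<in>H #> \<alpha>. inv (\<alpha> \<otimes> inv \<gamma>) \<otimes> \<alpha> = \<gamma>"
      unfolding r_coset_def using * by auto
    show "\<forall>b\<in>H. \<alpha> \<otimes> inv (inv b \<otimes> \<alpha>) = b"
      using * by simp
    show "(\<lambda>\<gamma>. \<alpha> \<otimes> inv \<gamma>) ` (H #> \<alpha>) \<subseteq> H"
      unfolding r_coset_def using * by auto
    show "(\<lambda>b. inv b \<otimes> \<alpha>) ` H \<subseteq> H #> \<alpha>"
      unfolding r_coset_def by auto
  qed
qed

end

theorem lemma5p8:
  fixes G :: "('a, 'b) monoid_scheme"
  assumes "garside G M \<Delta>"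
    and "parabolic G M \<Delta> H N \<delta>"
    and "\<alpha> \<in> carrier G"
  shows "lg_set G M \<Delta> (H #>\<^bsub>G\<^esub> \<alpha>) = dist_set G M \<Delta> \<alpha> H
    \<and> bij_betw (\<lambda>\<gamma>. \<alpha> \<otimes>\<^bsub>G\<^esub> inv\<^bsub>G\<^esub> \<gamma>)
        {\<gamma> \<in> H #>\<^bsub>G\<^esub> \<alpha>. lg G M \<Delta> \<gamma> = lg_set G M \<Delta> (H #>\<^bsub>G\<^esub> \<alpha>)}
        (proj G M \<Delta> H \<alpha>)"
proof -
  interpret group G
    using assms(1) by (simp add: garside_def)
  have M: "M \<subseteq> carrier G"
    using assms(1) by (simp add: garside_def pointed_submonoid_def)
  then have gens: "gens G M \<Delta> \<subseteq> carrier G"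
    by (auto simp: gens_def Div_def DivL_def)
  have "Div G M \<delta> \<subseteq> carrier G"
    using M by (auto simp: Div_def DivL_def)
  moreover have "H = generate G (Div G M \<delta>)"
    using assms(2) unfolding parabolic_def by blast
  ultimately have H: "subgroup H G"
    using generate_is_subgroup by simp
  have lg_dist: "lg G M \<Delta> \<gamma> = dist G M \<Delta> \<alpha> (\<alpha> \<otimes>\<^bsub>G\<^esub> inv\<^bsub>G\<^esub> \<gamma>)" if "\<gamma> \<in> H #>\<^bsub>G\<^esub> \<alpha>" for \<gamma>
  proof (rule lg_eq_dist[OF gens assms(3)])
    show "\<gamma> \<in> carrier G"
      using that r_coset_subset_G[OF subgroup.subset[OF H] assms(3)] by blast
  qed
  from bij_betw_minimizers[where u = "lg G M \<Delta>" and v = "dist G M \<Delta> \<alpha>",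
      OF bij_betw_rcos_mult_inv[OF H assms(3)] lg_dist]
  show ?thesis
    unfolding lg_set_def dist_set_def proj_def by simp
qed

end
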